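(* Let $N_r\ge N_t\ge 2$, let $\mathbf{H}\in\mathbb{C}^{N_r\times N_t}$ have full column rank, let $\mathbf{H}=\mathbf{Q}\mathbf{L}$ be its thin QL decomposition, and let $\mathcal{X}\subset\mathbb{C}$ be a finite constellation. Fix $1\le\nu\le N_t-1$ and partition $$\mathbf{L}=\begin{bmatrix}\mathbf{P}&\mathbf{0}\\ \mathbf{R}&\mathbf{S}\end{bmatrix},$$ with $\mathbf{P}\in\mathbb{C}^{\nu\times\nu}$ and $\mathbf{S}\in\mathbb{C}^{(N_t-\nu)\times(N_t-\nu)}$. Define $$\boldsymbol{\Sigma}=\operatorname{diag}(\mathbf{S}^{-1}\mathbf{S}^{-\dagger})^{-1/2},\qquad \mathbf{W}_{\mathrm p}=\begin{bmatrix}\mathbf{I}_\nu&\mathbf{0}\\ \mathbf{0}&\boldsymbol{\Sigma}\mathbf{S}^{-1}\end{bmatrix}.$$ For $\mathbf{y}\in\mathbb{C}^{N_r}$ let $\tilde{\mathbf{y}}=\mathbf{Q}^\dagger\mathbf{y}$, and define $$\mathbf{x}_{\mathrm{ML}}=\arg\min_{\mathbf{x}\in\mathcal{X}^{N_t}}\|\tilde{\mathbf{y}}-\mathbf{L}\mathbf{x}\|,\qquad \mathbf{x}_{\mathrm{WLD}}=\arg\min_{\mathbf{x}\in\mathcal{X}^{N_t}}\|\mathbf{W}_{\mathrm p}(\tilde{\mathbf{y}}-\mathbf{L}\mathbf{x})\|.$$ Then $$\|\tilde{\mathbf{y}}-\mathbf{L}\mathbf{x}_{\mathrm{ML}}\|\le\|\tilde{\mathbf{y}}-\mathbf{L}\mathbf{x}_{\mathrm{WLD}}\|\le\kappa(\mathbf{W}_{\mathrm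 p})\,\|\tilde{\mathbf{y}}-\mathbf{L}\mathbf{x}_{\mathrm{ML}}\|$$ and $$\|\mathbf{W}_{\mathrm p}(\tilde{\mathbf{y}}-\mathbf{L}\mathbf{x}_{\mathrm{WLD}})\|\le\sigma_{\max}(\mathbf{W}_{\mathrm p})\,\|\tilde{\mathbf{y}}-\mathbf{L}\mathbf{x}_{\mathrm{ML}}\|,$$ where $\kappa(\mathbf{W}_{\mathrm p})=\sigma_{\max}(\mathbf{W}_{\mathrm p})/\sigma_{\min}(\mathbf{W}_{\mathrm p})$, and $\sigma_{\max}(\mathbf{W}_{\mathrm p}),\sigma_{\min}(\mathbf{W}_{\mathrm p})$ are the largest and smallest singular values of $\mathbf{W}_{\mathrm p}$.
   Context: The thin QL decomposition $\mathbf{H}=\mathbf{Q}\mathbf{L}$ means that $\mathbf{Q}\in\mathbb{C}^{N_r\times N_t}$ has orthonormal columns and $\mathbf{L}\in\mathbb{C}^{N_t\times N_t}$ is lower triangular with real positive diagonal entries. For a square matrix $\mathbf{A}$, $\operatorname{diag}(\mathbf{A})$ denotes the diagonal matrix having the same diagonal entries as $\mathbf{A}$. The superscript $\dagger$ denotes conjugate transpose, and $\|\cdot\|$ is the Euclidean norm. The argmins denote any minimizer. *)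

theory Defs
  imports Complex_Main "Jordan_Normal_Form.Schur_Decomposition" "Jordan_Normal_Form.DL_Rank"
begin

definition cvnorm :: "complex vec \<Rightarrow> real" where
  "cvnorm v = sqrt (\<Sum>i<dim_vec v. (cmod (v $ i))\<^sup>2)"

definition mat_inv :: "complex mat \<Rightarrow> complex mat" where
  "mat_inv A = (SOME B. B \<in> carrier_mat (dim_row A) (dim_row A) \<and>
       A * B = 1\<^sub>m (dim_row A) \<and> B * A = 1\<^sub>m (dim_row A))"

definition singular_values :: "complex mat \<Rightarrow> real set" where
  "singular_values A = {sqrt (Re k) | k. eigenvalue (mat_adjoint A * A) k}"

definition sigma_max :: "complex mat \<Rightarrow> real" where
  "sigma_max A = Max (singular_values A)"

definition sigma_min :: "complex mat \<Rightarrow> real" where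
  "sigma_min A = Min (singular_values A)"

definition cond_num :: "complex mat \<Rightarrow> real" where
  "cond_num A = sigma_max A / sigma_min A"

definition const_vecs :: "complex set \<Rightarrow> nat \<Rightarrow> complex vec set" where
  "const_vecs X n = {x \<in> carrier_vec n. \<forall>i<n. x $ i \<in> X}"

definition Sigma_mat :: "complex mat \<Rightarrow> complex mat" where
  "Sigma_mat S = mat_diag (dim_row S) (\<lambda>i. complex_of_real
     (1 / sqrt (Re ((mat_inv S * mat_adjoint (mat_inv S)) $$ (i, i)))))"

definition W_p :: "nat \<Rightarrow> complex mat \<Rightarrow> complex mat" where
  "W_p nu S = four_block_mat (1\<^sub>m nu) (0\<^sub>m nu (dim_row S)) (0\<^sub>m (dim_row S) nu)
                 (Sigma_mat S * mat_inv S)"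

end

(* For an invertible square W the Rayleigh quotient of the Hermitian matrix W^dagger W lies
   between its smallest and largest eigenvalue, so sigma_min(W) |v| <= |W v| <= sigma_max(W) |v|
   with sigma_min(W) > 0. The Rayleigh bounds are proved by induction on the dimension: a unitary
   change of basis whose first column is an eigenvector splits off that eigenvalue and leaves a
   smaller Hermitian block, whose eigenvalues are eigenvalues of the original matrix.
   W_p is invertible because S is lower triangular with positive diagonal. Writing e_ML and e_WLD
   for the two residuals, optimality of x_ML gives |e_ML| <= |e_WLD|, optimality of x_WLD gives
   |W_p e_WLD| <= |W_p e_ML| <= sigma_max |e_ML|, and sigma_min |e_WLD| <= |W_p e_WLD| then yields
   the bound by the condition number. *)

theory Submission
  imports Defs "Jordan_Normal_Form.Spectral_Radius"
begin

lemma mat_adjoint_dim [simp]: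
  fixes A :: "complex mat"
  shows "dim_row (mat_adjoint A) = dim_col A" "dim_col (mat_adjoint A) = dim_row A"
  unfolding mat_adjoint_def by auto

lemma mat_adjoint_carrier [simp]:
  fixes A :: "complex mat"
  shows "A \<in> carrier_mat n m \<Longrightarrow> mat_adjoint A \<in> carrier_mat m n"
  unfolding mat_adjoint_def by auto

lemma index_mat_adjoint [simp]:
  fixes A :: "complex mat"
  shows "i < dim_col A \<Longrightarrow> j < dim_row A \<Longrightarrow> mat_adjoint A $$ (i, j) = cnj (A $$ (j, i))"
  unfolding mat_adjoint_def by (auto simp: mat_of_rows_def)

lemma mat_adjoint_adjoint [simp]:
  fixes A :: "complex mat"
  shows "mat_adjoint (mat_adjoint A) = A"
  by (rule eq_matI) auto

lemma mat_adjoint_mult: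
  fixes A B :: "complex mat"
  assumes "A \<in> carrier_mat n k" "B \<in> carrier_mat k m"
  shows "mat_adjoint (A * B) = mat_adjoint B * mat_adjoint A"
proof (rule eq_matI)
  fix i j assume "i < dim_row (mat_adjoint B * mat_adjoint A)" "j < dim_col (mat_adjoint B * mat_adjoint A)"
  then show "mat_adjoint (A * B) $$ (i, j) = (mat_adjoint B * mat_adjoint A) $$ (i, j)"
    using assms by (auto simp: scalar_prod_def sum_conjugate mult.commute intro!: sum.cong)
qed (use assms in auto)

lemma index_mat_adjoint_mult:
  fixes U B :: "complex mat"
  assumes "U \<in> carrier_mat n k" "B \<in> carrier_mat n m" "i < k" "j < m"
  shows "(mat_adjoint U * B) $$ (i, j) = col B j \<bullet>c col U i"
  using assms by (auto simp: scalar_prod_def mult.commute intro!: sum.cong)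

lemma cscalar_prod_mult_mat_vec:
  fixes B :: "complex mat"
  assumes B: "B \<in> carrier_mat n k" and v: "v \<in> carrier_vec n" and w: "w \<in> carrier_vec k"
  shows "v \<bullet>c (B *\<^sub>v w) = (mat_adjoint B *\<^sub>v v) \<bullet>c w"
proof -
  have "v \<bullet>c (B *\<^sub>v w) = (\<Sum>i<n. \<Sum>j<k. v $ i * cnj (B $$ (i, j)) * cnj (w $ j))"
    using B v w by (simp add: scalar_prod_def atLeast0LessThan sum_distrib_left mult.assoc)
  also have "\<dots> = (\<Sum>j<k. \<Sum>i<n. v $ i * cnj (B $$ (i, j)) * cnj (w $ j))"
    by (rule sum.swap)
  also have "\<dots> = (\<Sum>j<k. (\<Sum>i<n. cnj (B $$ (i, j)) * v $ i) * cnj (w $ j))"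
    by (simp add: sum_distrib_left sum_distrib_right mult_ac)
  also have "\<dots> = (mat_adjoint B *\<^sub>v v) \<bullet>c w"
    using B v w by (simp add: scalar_prod_def atLeast0LessThan)
  finally show ?thesis .
qed

lemma cscalar_prod_self:
  fixes v :: "complex vec"
  shows "v \<bullet>c v = complex_of_real ((cvnorm v)\<^sup>2)"
proof -
  have "v \<bullet>c v = (\<Sum>i<dim_vec v. v $ i * cnj (v $ i))"
    by (simp add: scalar_prod_def atLeast0LessThan)
  also have "\<dots> = complex_of_real (\<Sum>i<dim_vec v. (cmod (v $ i))\<^sup>2)"
    unfolding of_real_sum by (simp only: complex_norm_square)
  finally show ?thesis
    unfolding cvnorm_def by (simp add: sum_nonneg)
qed

lemma cvnorm_nonneg [simp]: "0 \<le> cvnorm v"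
  unfolding cvnorm_def by (simp add: sum_nonneg)

lemma cvnorm_pos:
  fixes v :: "complex vec"
  assumes "v \<in> carrier_vec n" "v \<noteq> 0\<^sub>v n"
  shows "0 < cvnorm v"
proof -
  have "cvnorm v \<noteq> 0"
    using conjugate_square_eq_0_vec[OF assms(1)] assms(2) by (auto simp: cscalar_prod_self)
  then show ?thesis
    using cvnorm_nonneg[of v] by linarith
qed

lemma cvnorm_vCons: "(cvnorm (vCons a v))\<^sup>2 = (cmod a)\<^sup>2 + (cvnorm v)\<^sup>2"
proof -
  have "complex_of_real ((cvnorm (vCons a v))\<^sup>2) = vCons a v \<bullet>c vCons a v"
    by (rule cscalar_prod_self[symmetric])
  also have "\<dots> = a * cnj a + v \<bullet>c v"
    by simp
  also have "\<dots> = complex_of_real ((cmod a)\<^sup>2 + (cvnorm v)\<^sup>2)"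
    by (simp only: cscalar_prod_self complex_norm_square of_real_add)
  finally show ?thesis
    using of_real_eq_iff by blast
qed

section \<open>Unitary matrices\<close>

definition unitary_mat :: "nat \<Rightarrow> complex mat \<Rightarrow> bool" where
  "unitary_mat n U \<longleftrightarrow> U \<in> carrier_mat n n \<and> mat_adjoint U * U = 1\<^sub>m n"

lemma unitary_mat_right_inverse:
  assumes "unitary_mat n U"
  shows "U * mat_adjoint U = 1\<^sub>m n"
  using assms mat_mult_left_right_inverse[of "mat_adjoint U" n U] unfolding unitary_mat_def by auto

lemma unitary_mat_cols_orthonormal:
  assumes "unitary_mat n U" "i < n" "j < n"
  shows "col U j \<bullet>c col U i = (if i = j then 1 else 0)"
  using assms index_mat_adjoint_mult[of U n n U n i j] unfolding unitary_mat_def by auto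

lemma cvnorm_unitary_mult:
  assumes U: "unitary_mat n U" and x: "x \<in> carrier_vec n"
  shows "cvnorm (U *\<^sub>v x) = cvnorm x"
proof -
  have U_carr: "U \<in> carrier_mat n n" and UU: "mat_adjoint U * U = 1\<^sub>m n"
    using U unfolding unitary_mat_def by auto
  have "(U *\<^sub>v x) \<bullet>c (U *\<^sub>v x) = (mat_adjoint U *\<^sub>v (U *\<^sub>v x)) \<bullet>c x"
    using U_carr x by (intro cscalar_prod_mult_mat_vec) auto
  also have "\<dots> = x \<bullet>c x"
    using U_carr x UU by (simp flip: assoc_mult_mat_vec[of _ n n U n])
  finally have "(cvnorm (U *\<^sub>v x))\<^sup>2 = (cvnorm x)\<^sup>2"
    unfolding cscalar_prod_self using of_real_eq_iff by blast
  then show ?thesis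
    by (simp add: power2_eq_iff_nonneg)
qed

lemma unitary_mat_of_normalized_cols:
  assumes ws: "set ws \<subseteq> carrier_vec n" "corthogonal ws" "length ws = n"
  shows "unitary_mat n (mat_of_cols n (map (\<lambda>w. complex_of_real (1 / cvnorm w) \<cdot>\<^sub>v w) ws))"
    (is "unitary_mat n (mat_of_cols n ?bs)")
proof -
  let ?U = "mat_of_cols n ?bs"
  have U: "?U \<in> carrier_mat n n"
    using mat_of_cols_carrier(1)[of n ?bs] ws(3) by simp
  have ws_carr: "ws ! i \<in> carrier_vec n" if "i < n" for i
    using ws that by auto
  have "(mat_adjoint ?U * ?U) $$ (i, j) = 1\<^sub>m n $$ (i, j)" if i: "i < n" and j: "j < n" for i j
  proof -
    have "(mat_adjoint ?U * ?U) $$ (i, j) = ?bs ! j \<bullet>c ?bs ! i"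
      using index_mat_adjoint_mult[OF U U i j] ws_carr i j ws by simp
    also have "\<dots> = (ws ! j \<bullet>c ws ! i) / (complex_of_real (cvnorm (ws ! j)) * complex_of_real (cvnorm (ws ! i)))"
      using ws_carr[OF i] ws_carr[OF j] i j ws(3) by (simp add: conjugate_smult_vec)
    also have "\<dots> = 1\<^sub>m n $$ (i, j)"
    proof (cases "i = j")
      case True
      have "ws ! i \<bullet>c ws ! i \<noteq> 0"
        using corthogonalD[OF ws(2), of i i] i ws by auto
      then have "cvnorm (ws ! i) \<noteq> 0"
        by (auto simp: cscalar_prod_self)
      then show ?thesis
        using True i by (simp add: cscalar_prod_self power2_eq_square)
    next
      case False
      then show ?thesis
        using corthogonalD[OF ws(2), of j i] i j ws by auto
    qed
    finally show ?thesis .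
  qed
  then have "mat_adjoint ?U * ?U = 1\<^sub>m n"
    using U by (intro eq_matI) auto
  with U show ?thesis
    unfolding unitary_mat_def by blast
qed

lemma nonzero_vec_dim_pos:
  assumes "v \<in> carrier_vec n" "v \<noteq> 0\<^sub>v n"
  shows "0 < n"
proof (rule ccontr)
  assume "\<not> 0 < n"
  then have "v = 0\<^sub>v n"
    using assms(1) by (intro eq_vecI) auto
  with assms(2) show False
    by contradiction
qed

lemma corthogonal_completion:
  fixes u :: "complex vec"
  assumes u: "u \<in> carrier_vec n" and u0: "u \<noteq> 0\<^sub>v n"
  obtains ws where "set ws \<subseteq> carrier_vec n" "corthogonal ws" "length ws = n" "ws ! 0 = u"
proof -
  interpret cof_vec_space n "TYPE(complex)" .
  note bc = basis_completion[OF u u0]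
  obtain rest where b: "basis_completion u = u # rest"
    using bc(6,7) nonzero_vec_dim_pos[OF u u0] by (cases "basis_completion u") auto
  define ws where "ws = gram_schmidt n (basis_completion u)"
  note gs = gram_schmidt_result[OF bc(2,4,5) ws_def]
  have ws: "set ws \<subseteq> carrier_vec n" "corthogonal ws" "length ws = n"
    using gs(2-4) bc(6) by simp_all
  have "ws \<noteq> []"
    using ws(3) nonzero_vec_dim_pos[OF u u0] by auto
  moreover have "hd ws = u"
    unfolding ws_def b using u by simp
  ultimately have "ws ! 0 = u"
    by (simp add: hd_conv_nth)
  with ws that show thesis
    by blast
qed

lemma unitary_mat_with_eigenvector:
  assumes M: "M \<in> carrier_mat n n" and ev: "eigenvector M u e"
  obtains U where "unitary_mat n U" "M *\<^sub>v col U 0 = e \<cdot>\<^sub>v col U 0"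
proof -
  from ev M have u: "u \<in> carrier_vec n" and u0: "u \<noteq> 0\<^sub>v n" and Mu: "M *\<^sub>v u = e \<cdot>\<^sub>v u"
    unfolding eigenvector_def by auto
  obtain ws where ws: "set ws \<subseteq> carrier_vec n" "corthogonal ws" "length ws = n" and ws0: "ws ! 0 = u"
    using corthogonal_completion[OF u u0] .
  have n0: "0 < n"
    by (rule nonzero_vec_dim_pos[OF u u0])
  define U where "U = mat_of_cols n (map (\<lambda>w. complex_of_real (1 / cvnorm w) \<cdot>\<^sub>v w) ws)"
  have "col U 0 = complex_of_real (1 / cvnorm u) \<cdot>\<^sub>v u"
    unfolding U_def using ws ws0 n0 u by simp
  then have "M *\<^sub>v col U 0 = e \<cdot>\<^sub>v col U 0"
    using M u Mu by (simp add: mult_mat_vec smult_smult_assoc mult.commute)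
  moreover have "unitary_mat n U"
    unfolding U_def by (rule unitary_mat_of_normalized_cols[OF ws])
  ultimately show thesis
    using that by blast
qed

section \<open>Rayleigh quotients of Hermitian matrices\<close>

definition hermitian :: "complex mat \<Rightarrow> bool" where
  "hermitian M \<longleftrightarrow> mat_adjoint M = M"

lemma hermitian_adjoint_mult_self: "hermitian (mat_adjoint W * W)"
  unfolding hermitian_def
  by (subst mat_adjoint_mult[of _ "dim_col W" "dim_row W" _ "dim_col W"]) auto

lemma hermitian_unitary_conj:
  assumes "hermitian M" "M \<in> carrier_mat n n" "U \<in> carrier_mat n n"
  shows "hermitian (mat_adjoint U * (M * U))"
  using assms unfolding hermitian_def
  by (simp add: mat_adjoint_mult[of _ n n _ n] assoc_mult_mat[of _ n n _ n _ n])

lemma hermitian_index: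
  assumes "hermitian M" "M \<in> carrier_mat n n" "i < n" "j < n"
  shows "M $$ (i, j) = cnj (M $$ (j, i))"
  using assms index_mat_adjoint[of i M j] unfolding hermitian_def by auto

lemma four_block_diag_mult_vCons:
  assumes M': "M' \<in> carrier_mat m m" and x: "x \<in> carrier_vec m"
  shows "four_block_mat (mat 1 1 (\<lambda>_. e)) (0\<^sub>m 1 m) (0\<^sub>m m 1) M' *\<^sub>v vCons a x
           = vCons (e * a) (M' *\<^sub>v x)"
proof -
  have "mat 1 1 (\<lambda>_. e) *\<^sub>v vCons a vNil = vCons (e * a) vNil"
    by (rule eq_vecI) (auto simp: scalar_prod_def)
  then show ?thesis
    using mult_mat_vec_split[of "mat 1 1 (\<lambda>_. e)" 1 M' m "vCons a vNil" x] M' x by simp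
qed

lemma hermitian_block_diag:
  assumes A: "A \<in> carrier_mat (Suc m) (Suc m)" "hermitian A"
    and col0: "\<And>i. i < Suc m \<Longrightarrow> A $$ (i, 0) = (if i = 0 then e else 0)"
  defines "A' \<equiv> mat m m (\<lambda>(i, j). A $$ (Suc i, Suc j))"
  shows "hermitian A'" "A = four_block_mat (mat 1 1 (\<lambda>_. e)) (0\<^sub>m 1 m) (0\<^sub>m m 1) A'"
proof -
  have A': "A' \<in> carrier_mat m m"
    unfolding A'_def by simp
  show "hermitian A'"
    unfolding hermitian_def
  proof (rule eq_matI)
    fix i j assume "i < dim_row A'" "j < dim_col A'"
    then have i: "i < m" and j: "j < m"
      unfolding A'_def by auto
    have "mat_adjoint A' $$ (i, j) = cnj (A $$ (Suc j, Suc i))"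
      unfolding A'_def using i j by simp
    also have "\<dots> = A $$ (Suc i, Suc j)"
      using hermitian_index[OF A(2,1), of "Suc i" "Suc j"] i j by simp
    finally show "mat_adjoint A' $$ (i, j) = A' $$ (i, j)"
      unfolding A'_def using i j by simp
  qed (simp_all add: A'_def)
  show "A = four_block_mat (mat 1 1 (\<lambda>_. e)) (0\<^sub>m 1 m) (0\<^sub>m m 1) A'"
  proof (rule eq_matI)
    fix i j assume "i < dim_row (four_block_mat (mat 1 1 (\<lambda>_. e)) (0\<^sub>m 1 m) (0\<^sub>m m 1) A')"
      "j < dim_col (four_block_mat (mat 1 1 (\<lambda>_. e)) (0\<^sub>m 1 m) (0\<^sub>m m 1) A')"
    then have i: "i < Suc m" and j: "j < Suc m"
      using A' by auto
    consider "j = 0" | "i = 0" "0 < j" | "0 < i" "0 < j"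
      by blast
    then show "A $$ (i, j) = four_block_mat (mat 1 1 (\<lambda>_. e)) (0\<^sub>m 1 m) (0\<^sub>m m 1) A' $$ (i, j)"
    proof cases
      case 1
      then show ?thesis
        using col0[OF i] i A' by simp
    next
      case 2
      then show ?thesis
        using hermitian_index[OF A(2,1) i j] col0[OF j] j A' by simp
    next
      case 3
      then show ?thesis
        using i j unfolding A'_def by (cases i; cases j) auto
    qed
  qed (use A A' in auto)
qed

lemma hermitian_deflation:
  assumes M: "M \<in> carrier_mat (Suc m) (Suc m)" "hermitian M"
    and U: "unitary_mat (Suc m) U" and ev: "M *\<^sub>v col U 0 = e \<cdot>\<^sub>v col U 0"
  obtains M' where "M' \<in> carrier_mat m m" "hermitian M'"
    "mat_adjoint U * (M * U) = four_block_mat (mat 1 1 (\<lambda>_. e)) (0\<^sub>m 1 m) (0\<^sub>m m 1) M'"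
proof -
  have U_carr: "U \<in> carrier_mat (Suc m) (Suc m)"
    using U unfolding unitary_mat_def by simp
  define A where "A = mat_adjoint U * (M * U)"
  have A: "A \<in> carrier_mat (Suc m) (Suc m)" "hermitian A"
    unfolding A_def using M U_carr hermitian_unitary_conj by auto
  have "A $$ (i, 0) = (if i = 0 then e else 0)" if i: "i < Suc m" for i
  proof -
    have "A $$ (i, 0) = col (M * U) 0 \<bullet>c col U i"
      unfolding A_def using M U_carr by (intro index_mat_adjoint_mult[OF U_carr _ i]) auto
    also have "\<dots> = (M *\<^sub>v col U 0) \<bullet>c col U i"
      using col_mult2[OF M(1) U_carr, of 0] by simp
    also have "\<dots> = e * (col U 0 \<bullet>c col U i)"
      unfolding ev using U_carr i by simp
    also have "\<dots> = (if i = 0 then e else 0)"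
      using unitary_mat_cols_orthonormal[OF U i, of 0] by simp
    finally show ?thesis .
  qed
  from hermitian_block_diag[OF A this] show thesis
    using that[of "mat m m (\<lambda>(i, j). A $$ (Suc i, Suc j))"] unfolding A_def by simp
qed

lemma unitary_similar:
  assumes U: "unitary_mat n U" and M: "M \<in> carrier_mat n n"
  shows "similar_mat M (mat_adjoint U * (M * U))"
proof -
  have U_carr: "U \<in> carrier_mat n n" and UU: "mat_adjoint U * U = 1\<^sub>m n"
    using U unfolding unitary_mat_def by auto
  note UU' = unitary_mat_right_inverse[OF U]
  have "U * (mat_adjoint U * (M * U)) = (U * mat_adjoint U) * (M * U)"
    using U_carr M by (intro assoc_mult_mat[symmetric, of _ n n _ n _ n]) auto
  also have "\<dots> = M * U"
    using UU' M U_carr by simp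
  finally have "U * (mat_adjoint U * (M * U)) * mat_adjoint U = M * U * mat_adjoint U"
    by simp
  also have "\<dots> = M"
    using U_carr M UU' by (subst assoc_mult_mat[of _ n n _ n _ n]) auto
  finally have "M = U * (mat_adjoint U * (M * U)) * mat_adjoint U" ..
  then have "similar_mat_wit M (mat_adjoint U * (M * U)) U (mat_adjoint U)"
    using U_carr M UU UU' by (intro similar_mat_witI[of _ _ n]) auto
  then show ?thesis
    unfolding similar_mat_def by blast
qed

lemma eigenvalue_deflation:
  assumes U: "unitary_mat (Suc m) U" and M: "M \<in> carrier_mat (Suc m) (Suc m)"
    and M': "M' \<in> carrier_mat m m"
    and A: "mat_adjoint U * (M * U) = four_block_mat (mat 1 1 (\<lambda>_. e)) (0\<^sub>m 1 m) (0\<^sub>m m 1) M'"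
    and ev: "eigenvalue M' \<mu>"
  shows "eigenvalue M \<mu>"
proof -
  have "char_poly M = char_poly (four_block_mat (mat 1 1 (\<lambda>_. e)) (0\<^sub>m 1 m) (0\<^sub>m m 1) M')"
    using char_poly_similar[OF unitary_similar[OF U M]] unfolding A .
  also have "\<dots> = char_poly (mat 1 1 (\<lambda>_. e)) * char_poly M'"
    using M' by (intro char_poly_four_block_zeros_col) auto
  finally show ?thesis
    using ev eigenvalue_root_char_poly[OF M] eigenvalue_root_char_poly[OF M'] by simp
qed

lemma deflated_quadratic_form:
  assumes U: "unitary_mat (Suc m) U" and M: "M \<in> carrier_mat (Suc m) (Suc m)"
    and M': "M' \<in> carrier_mat m m"
    and A: "mat_adjoint U * (M * U) = four_block_mat (mat 1 1 (\<lambda>_. e)) (0\<^sub>m 1 m) (0\<^sub>m m 1) M'"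
    and v: "v \<in> carrier_vec (Suc m)"
  obtains a x where "x \<in> carrier_vec m"
    "Re ((M *\<^sub>v v) \<bullet>c v) = Re e * (cmod a)\<^sup>2 + Re ((M' *\<^sub>v x) \<bullet>c x)"
    "(cvnorm v)\<^sup>2 = (cmod a)\<^sup>2 + (cvnorm x)\<^sup>2"
proof -
  have U_carr: "U \<in> carrier_mat (Suc m) (Suc m)"
    using U unfolding unitary_mat_def by auto
  have "mat_adjoint U *\<^sub>v v \<in> carrier_vec (Suc m)"
    by (rule mult_mat_vec_carrier[OF mat_adjoint_carrier[OF U_carr] v])
  then obtain a x where ax: "mat_adjoint U *\<^sub>v v = vCons a x" and x: "x \<in> carrier_vec m"
    by (cases "mat_adjoint U *\<^sub>v v") auto
  have y: "vCons a x \<in> carrier_vec (Suc m)"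
    using x by simp
  have v_eq: "v = U *\<^sub>v vCons a x"
    using U_carr v unitary_mat_right_inverse[OF U]
    by (simp flip: ax assoc_mult_mat_vec[of _ "Suc m" "Suc m" _ "Suc m"])
  have "(M *\<^sub>v v) \<bullet>c v = (mat_adjoint U *\<^sub>v (M *\<^sub>v (U *\<^sub>v vCons a x))) \<bullet>c vCons a x"
    unfolding v_eq using U_carr M x by (intro cscalar_prod_mult_mat_vec) auto
  also have "\<dots> = (mat_adjoint U * (M * U) *\<^sub>v vCons a x) \<bullet>c vCons a x"
    using assoc_mult_mat_vec[OF mat_adjoint_carrier[OF U_carr] mult_carrier_mat[OF M U_carr] y]
      assoc_mult_mat_vec[OF M U_carr y] by simp
  also have "\<dots> = e * (a * cnj a) + (M' *\<^sub>v x) \<bullet>c x"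
    unfolding A four_block_diag_mult_vCons[OF M' x] by (simp add: mult.assoc)
  finally have "Re ((M *\<^sub>v v) \<bullet>c v) = Re e * (cmod a)\<^sup>2 + Re ((M' *\<^sub>v x) \<bullet>c x)"
    by (simp flip: complex_norm_square)
  moreover have "(cvnorm v)\<^sup>2 = (cmod a)\<^sup>2 + (cvnorm x)\<^sup>2"
    unfolding v_eq cvnorm_unitary_mult[OF U y] by (rule cvnorm_vCons)
  ultimately show thesis
    using that x by blast
qed

(* The eigenvalues are in fact real, but only their real parts are ever used. *)
lemma hermitian_rayleigh_bounds:
  assumes "M \<in> carrier_mat n n" "hermitian M" "0 < n" "v \<in> carrier_vec n"
  shows "\<exists>a b. eigenvalue M a \<and> eigenvalue M b \<and>
    Re a * (cvnorm v)\<^sup>2 \<le> Re ((M *\<^sub>v v) \<bullet>c v) \<and> Re ((M *\<^sub>v v) \<bullet>c v) \<le> Re b * (cvnorm v)\<^sup>2"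
  using assms
proof (induction n arbitrary: M v)
  case 0
  then show ?case by simp
next
  case (Suc m)
  note M = Suc.prems(1) and v = Suc.prems(4)
  obtain e u where "eigenvector M u e"
    using spectrum_non_empty[OF M] unfolding spectrum_def eigenvalue_def by auto
  then have e: "eigenvalue M e"
    unfolding eigenvalue_def by blast
  obtain U where U: "unitary_mat (Suc m) U" and Ue: "M *\<^sub>v col U 0 = e \<cdot>\<^sub>v col U 0"
    using unitary_mat_with_eigenvector[OF M \<open>eigenvector M u e\<close>] by blast
  obtain M' where M': "M' \<in> carrier_mat m m" "hermitian M'"
    and A: "mat_adjoint U * (M * U) = four_block_mat (mat 1 1 (\<lambda>_. e)) (0\<^sub>m 1 m) (0\<^sub>m m 1) M'"
    using hermitian_deflation[OF M Suc.prems(2) U Ue] by blast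
  obtain a x where x: "x \<in> carrier_vec m"
    and quad: "Re ((M *\<^sub>v v) \<bullet>c v) = Re e * (cmod a)\<^sup>2 + Re ((M' *\<^sub>v x) \<bullet>c x)"
    and norm: "(cvnorm v)\<^sup>2 = (cmod a)\<^sup>2 + (cvnorm x)\<^sup>2"
    using deflated_quadratic_form[OF U M M'(1) A v] by blast
  show ?case
  proof (cases "m = 0")
    case True
    then have "Re ((M' *\<^sub>v x) \<bullet>c x) = 0" "cvnorm x = 0"
      using x M'(1) by (auto simp: scalar_prod_def cvnorm_def)
    then show ?thesis
      using e quad norm by auto
  next
    case False
    then obtain a' b' where ev': "eigenvalue M' a'" "eigenvalue M' b'"
      and lo': "Re a' * (cvnorm x)\<^sup>2 \<le> Re ((M' *\<^sub>v x) \<bullet>c x)"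
      and hi': "Re ((M' *\<^sub>v x) \<bullet>c x) \<le> Re b' * (cvnorm x)\<^sup>2"
      using Suc.IH[OF M' _ x] by blast
    have lift: "eigenvalue M \<mu>" if "eigenvalue M' \<mu>" for \<mu>
      by (rule eigenvalue_deflation[OF U M M'(1) A that])
    obtain lo where lo: "lo \<in> {e, a'}" "Re lo \<le> Re e" "Re lo \<le> Re a'"
      by (cases "Re e \<le> Re a'") auto
    obtain hi where hi: "hi \<in> {e, b'}" "Re e \<le> Re hi" "Re b' \<le> Re hi"
      by (cases "Re e \<le> Re b'") auto
    have "Re lo * (cvnorm v)\<^sup>2 \<le> Re e * (cmod a)\<^sup>2 + Re a' * (cvnorm x)\<^sup>2"
      unfolding norm distrib_left using lo by (intro add_mono mult_right_mono) auto
    also have "\<dots> \<le> Re ((M *\<^sub>v v) \<bullet>c v)"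
      unfolding quad using lo' by simp
    finally have "Re lo * (cvnorm v)\<^sup>2 \<le> Re ((M *\<^sub>v v) \<bullet>c v)" .
    moreover have "Re ((M *\<^sub>v v) \<bullet>c v) \<le> Re e * (cmod a)\<^sup>2 + Re b' * (cvnorm x)\<^sup>2"
      unfolding quad using hi' by simp
    moreover have "\<dots> \<le> Re hi * (cvnorm v)\<^sup>2"
      unfolding norm distrib_left using hi by (intro add_mono mult_right_mono) auto
    moreover have "eigenvalue M lo" "eigenvalue M hi"
      using lo(1) hi(1) e ev' lift by auto
    ultimately show ?thesis
      by (meson order.trans)
  qed
qed

section \<open>Bounds by singular values\<close>

lemma singular_values_eq:
  "singular_values W = (\<lambda>k. sqrt (Re k)) ` spectrum (mat_adjoint W * W)"
  unfolding singular_values_def spectrum_def by auto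

lemma singular_values_finite_nonempty:
  assumes "W \<in> carrier_mat n n" "0 < n"
  shows "finite (singular_values W)" "singular_values W \<noteq> {}"
proof -
  have "mat_adjoint W * W \<in> carrier_mat n n"
    by (rule mult_carrier_mat[OF mat_adjoint_carrier[OF assms(1)] assms(1)])
  then show "finite (singular_values W)" "singular_values W \<noteq> {}"
    using card_finite_spectrum(1) spectrum_non_empty assms(2) unfolding singular_values_eq by auto
qed

lemma gram_quadratic_form:
  assumes W: "W \<in> carrier_mat n m" and v: "v \<in> carrier_vec m"
  shows "Re (((mat_adjoint W * W) *\<^sub>v v) \<bullet>c v) = (cvnorm (W *\<^sub>v v))\<^sup>2"
proof -
  have "(W *\<^sub>v v) \<bullet>c (W *\<^sub>v v) = (mat_adjoint W *\<^sub>v (W *\<^sub>v v)) \<bullet>c v"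
    using W v by (intro cscalar_prod_mult_mat_vec) auto
  also have "\<dots> = ((mat_adjoint W * W) *\<^sub>v v) \<bullet>c v"
    using assoc_mult_mat_vec[OF mat_adjoint_carrier[OF W] W v] by simp
  finally have "((mat_adjoint W * W) *\<^sub>v v) \<bullet>c v = complex_of_real ((cvnorm (W *\<^sub>v v))\<^sup>2)"
    by (simp add: cscalar_prod_self)
  then show ?thesis
    by (metis Re_complex_of_real)
qed

lemma cvnorm_mult_mat_vec_sigma_bounds:
  assumes W: "W \<in> carrier_mat n n" and n: "0 < n" and v: "v \<in> carrier_vec n"
  shows "sigma_min W * cvnorm v \<le> cvnorm (W *\<^sub>v v)"
    and "cvnorm (W *\<^sub>v v) \<le> sigma_max W * cvnorm v"
proof -
  let ?M = "mat_adjoint W * W"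
  have M: "?M \<in> carrier_mat n n"
    by (rule mult_carrier_mat[OF mat_adjoint_carrier[OF W] W])
  obtain a b where ab: "eigenvalue ?M a" "eigenvalue ?M b"
    and lo: "Re a * (cvnorm v)\<^sup>2 \<le> (cvnorm (W *\<^sub>v v))\<^sup>2"
    and hi: "(cvnorm (W *\<^sub>v v))\<^sup>2 \<le> Re b * (cvnorm v)\<^sup>2"
    using hermitian_rayleigh_bounds[OF M hermitian_adjoint_mult_self n v]
    unfolding gram_quadratic_form[OF W v] by blast
  have sv: "sqrt (Re a) \<in> singular_values W" "sqrt (Re b) \<in> singular_values W"
    using ab unfolding singular_values_eq spectrum_def by auto
  note fin = singular_values_finite_nonempty(1)[OF W n]
  have "sigma_min W * cvnorm v \<le> sqrt (Re a) * cvnorm v"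
    unfolding sigma_min_def using Min_le[OF fin sv(1)] by (simp add: mult_right_mono)
  also have "\<dots> \<le> cvnorm (W *\<^sub>v v)"
    using real_sqrt_le_mono[OF lo] by (simp add: real_sqrt_mult)
  finally show "sigma_min W * cvnorm v \<le> cvnorm (W *\<^sub>v v)" .
  have "cvnorm (W *\<^sub>v v) \<le> sqrt (Re b) * cvnorm v"
    using real_sqrt_le_mono[OF hi] by (simp add: real_sqrt_mult)
  also have "\<dots> \<le> sigma_max W * cvnorm v"
    unfolding sigma_max_def using Max_ge[OF fin sv(2)] by (simp add: mult_right_mono)
  finally show "cvnorm (W *\<^sub>v v) \<le> sigma_max W * cvnorm v" .
qed

lemma sigma_min_pos:
  assumes W: "W \<in> carrier_mat n n" and n: "0 < n" and det: "det W \<noteq> 0"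
  shows "0 < sigma_min W"
proof -
  have "0 < s" if sv: "s \<in> singular_values W" for s
  proof -
    obtain k where k: "eigenvalue (mat_adjoint W * W) k" and s: "s = sqrt (Re k)"
      using sv unfolding singular_values_def by auto
    then obtain z where "eigenvector (mat_adjoint W * W) z k"
      unfolding eigenvalue_def by blast
    then have z: "z \<in> carrier_vec n" "z \<noteq> 0\<^sub>v n"
      and Mz: "(mat_adjoint W * W) *\<^sub>v z = k \<cdot>\<^sub>v z"
      using W unfolding eigenvector_def by auto
    have "W *\<^sub>v z \<noteq> 0\<^sub>v n"
      using det_0_iff_vec_prod_zero[OF W] det z by blast
    then have "0 < (cvnorm (W *\<^sub>v z))\<^sup>2"
      using cvnorm_pos[of "W *\<^sub>v z" n] W z by simp
    also have "(cvnorm (W *\<^sub>v z))\<^sup>2 = Re k * (cvnorm z)\<^sup>2"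
      unfolding gram_quadratic_form[OF W z(1), symmetric] Mz using z(1)
      by (simp add: cscalar_prod_self)
    finally have "0 < Re k"
      by (simp add: zero_less_mult_iff)
    then show ?thesis
      unfolding s by simp
  qed
  then show ?thesis
    unfolding sigma_min_def using singular_values_finite_nonempty[OF W n] by simp
qed

lemma weighted_residual_bounds:
  assumes W: "W \<in> carrier_mat n n" "0 < n" "det W \<noteq> 0"
    and eM: "eM \<in> carrier_vec n" and eW: "eW \<in> carrier_vec n"
    and opt: "cvnorm (W *\<^sub>v eW) \<le> cvnorm (W *\<^sub>v eM)"
  shows "cvnorm (W *\<^sub>v eW) \<le> sigma_max W * cvnorm eM"
    and "cvnorm eW \<le> cond_num W * cvnorm eM"
proof -
  show max: "cvnorm (W *\<^sub>v eW) \<le> sigma_max W * cvnorm eM"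
    using opt cvnorm_mult_mat_vec_sigma_bounds(2)[OF W(1,2) eM] by linarith
  have "sigma_min W * cvnorm eW \<le> sigma_max W * cvnorm eM"
    using max cvnorm_mult_mat_vec_sigma_bounds(1)[OF W(1,2) eW] by linarith
  then show "cvnorm eW \<le> cond_num W * cvnorm eM"
    using sigma_min_pos[OF W] unfolding cond_num_def by (simp add: field_simps)
qed

section \<open>The weighting matrix\<close>

lemma mat_inv_inverse:
  assumes S: "S \<in> carrier_mat k k" and det: "det S \<noteq> 0"
  shows "mat_inv S \<in> carrier_mat k k" "S * mat_inv S = 1\<^sub>m k" "mat_inv S * S = 1\<^sub>m k"
proof -
  have "\<exists>B. B \<in> carrier_mat k k \<and> S * B = 1\<^sub>m k \<and> B * S = 1\<^sub>m k"
    using det_non_zero_imp_unit[OF S det, of undefined] unfolding Units_def ring_mat_simps by auto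
  from someI_ex[OF this] show "mat_inv S \<in> carrier_mat k k" "S * mat_inv S = 1\<^sub>m k" "mat_inv S * S = 1\<^sub>m k"
    using S unfolding mat_inv_def by auto
qed

lemma det_lower_triangular_nonzero:
  fixes A :: "'a :: idom mat"
  assumes A: "A \<in> carrier_mat n n" and lower: "\<And>i j. i < j \<Longrightarrow> j < n \<Longrightarrow> A $$ (i, j) = 0"
    and diag: "\<And>i. i < n \<Longrightarrow> A $$ (i, i) \<noteq> 0"
  shows "det A \<noteq> 0"
proof -
  have "det A = prod_list (diag_mat A)"
    by (rule det_lower_triangular[OF lower A])
  also have "\<dots> \<noteq> 0"
    using A diag by (auto simp: diag_mat_def prod_list_zero_iff)
  finally show ?thesis .
qed

lemma diag_mult_adjoint_pos:
  assumes Q: "Q \<in> carrier_mat k k" and S: "S \<in> carrier_mat k k" and QS: "Q * S = 1\<^sub>m k"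
    and i: "i < k"
  shows "0 < Re ((Q * mat_adjoint Q) $$ (i, i))"
proof -
  have "row Q i \<noteq> 0\<^sub>v k"
  proof
    assume "row Q i = 0\<^sub>v k"
    then have "(Q * S) $$ (i, i) = 0"
      using Q S i by (simp add: scalar_prod_def)
    with QS i show False
      by simp
  qed
  then have "0 < cvnorm (row Q i)"
    using Q by (intro cvnorm_pos[of _ k]) auto
  then have "0 < (cvnorm (row Q i))\<^sup>2"
    by simp
  moreover have "(Q * mat_adjoint Q) $$ (i, i) = row Q i \<bullet>c row Q i"
    using Q i by (simp add: scalar_prod_def)
  ultimately show ?thesis
    by (simp add: cscalar_prod_self)
qed

lemma W_p_invertible:
  assumes S: "S \<in> carrier_mat k k" and det: "det S \<noteq> 0"
  shows "W_p nu S \<in> carrier_mat (nu + k) (nu + k)" "det (W_p nu S) \<noteq> 0"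
proof -
  note Si = mat_inv_inverse[OF S det]
  have Sigma: "Sigma_mat S \<in> carrier_mat k k"
    unfolding Sigma_mat_def using S by simp
  have "Re ((mat_inv S * mat_adjoint (mat_inv S)) $$ (i, i)) \<noteq> 0" if "i < k" for i
    using diag_mult_adjoint_pos[OF Si(1) S Si(3) that] by simp
  then have "det (Sigma_mat S) \<noteq> 0"
    unfolding Sigma_mat_def using S by (intro det_lower_triangular_nonzero) (auto simp: mat_diag_def)
  moreover have "det (mat_inv S) \<noteq> 0"
    using det_mult[OF S Si(1)] Si(2) by auto
  ultimately have det_SSi: "det (Sigma_mat S * mat_inv S) \<noteq> 0"
    using det_mult[OF Sigma Si(1)] by simp
  have SSi: "Sigma_mat S * mat_inv S \<in> carrier_mat k k"
    using Sigma Si(1) by simp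
  have W: "W_p nu S = four_block_mat (1\<^sub>m nu) (0\<^sub>m nu k) (0\<^sub>m k nu) (Sigma_mat S * mat_inv S)"
    unfolding W_p_def using S by simp
  show "W_p nu S \<in> carrier_mat (nu + k) (nu + k)"
    unfolding W using SSi by simp
  have "det (W_p nu S) = det (1\<^sub>m nu) * det (Sigma_mat S * mat_inv S)"
    unfolding W by (rule det_four_block_mat_lower_left_zero) (use SSi in auto)
  with det_SSi show "det (W_p nu S) \<noteq> 0"
    by simp
qed

theorem lemma1:
  fixes Nr Nt nu :: nat
    and H Q L P R S :: "complex mat"
    and X :: "complex set"
    and y xML xWLD :: "complex vec"
  assumes dims: "Nr \<ge> Nt" "Nt \<ge> 2"
    and H_carr: "H \<in> carrier_mat Nr Nt"
    and H_rank: "vec_space.rank Nr H = Nt"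
    and Q_carr: "Q \<in> carrier_mat Nr Nt"
    and Q_orth: "mat_adjoint Q * Q = 1\<^sub>m Nt"
    and L_carr: "L \<in> carrier_mat Nt Nt"
    and L_lower: "\<forall>i<Nt. \<forall>j<Nt. i < j \<longrightarrow> L $$ (i, j) = 0"
    and L_diag: "\<forall>i<Nt. L $$ (i, i) \<in> \<real> \<and> Re (L $$ (i, i)) > 0"
    and QL: "H = Q * L"
    and X_fin: "finite X" and X_ne: "X \<noteq> {}"
    and nu: "1 \<le> nu" "nu \<le> Nt - 1"
    and P_carr: "P \<in> carrier_mat nu nu"
    and R_carr: "R \<in> carrier_mat (Nt - nu) nu"
    and S_carr: "S \<in> carrier_mat (Nt - nu) (Nt - nu)"
    and L_part: "L = four_block_mat P (0\<^sub>m nu (Nt - nu)) R S"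
    and y_carr: "y \<in> carrier_vec Nr"
    and xML: "xML \<in> const_vecs X Nt"
      "\<forall>x \<in> const_vecs X Nt.
         cvnorm (mat_adjoint Q *\<^sub>v y - L *\<^sub>v xML) \<le> cvnorm (mat_adjoint Q *\<^sub>v y - L *\<^sub>v x)"
    and xWLD: "xWLD \<in> const_vecs X Nt"
      "\<forall>x \<in> const_vecs X Nt.
         cvnorm (W_p nu S *\<^sub>v (mat_adjoint Q *\<^sub>v y - L *\<^sub>v xWLD))
         \<le> cvnorm (W_p nu S *\<^sub>v (mat_adjoint Q *\<^sub>v y - L *\<^sub>v x))"
  shows "let yt = mat_adjoint Q *\<^sub>v y
         in cvnorm (yt - L *\<^sub>v xML) \<le> cvnorm (yt - L *\<^sub>v xWLD)
          \<and> cvnorm (yt - L *\<^sub>v xWLD) \<le> cond_num (W_p nu S) * cvnorm (yt - L *\<^sub>v xML)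
          \<and> cvnorm (W_p nu S *\<^sub>v (yt - L *\<^sub>v xWLD)) \<le> sigma_max (W_p nu S) * cvnorm (yt - L *\<^sub>v xML)"
proof -
  define k where "k = Nt - nu"
  have Nt: "nu + k = Nt" "0 < Nt"
    unfolding k_def using nu dims by auto
  have S: "S \<in> carrier_mat k k"
    using S_carr unfolding k_def .
  have S_L: "S $$ (i, j) = L $$ (nu + i, nu + j)" if "i < k" "j < k" for i j
    unfolding L_part using that P_carr S by simp
  have "det S \<noteq> 0"
  proof (rule det_lower_triangular_nonzero[OF S])
    show "S $$ (i, j) = 0" if "i < j" "j < k" for i j
      using L_lower S_L[of i j] Nt(1) that by simp
    show "S $$ (i, i) \<noteq> 0" if "i < k" for i
      using L_diag[rule_format, of "nu + i"] S_L[OF that that] Nt(1) that by auto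
  qed
  with W_p_invertible[OF S] Nt have W: "W_p nu S \<in> carrier_mat Nt Nt" "det (W_p nu S) \<noteq> 0"
    by auto
  define yt where "yt = mat_adjoint Q *\<^sub>v y"
  have yt: "yt \<in> carrier_vec Nt"
    unfolding yt_def by (rule mult_mat_vec_carrier[OF mat_adjoint_carrier[OF Q_carr] y_carr])
  have residual: "yt - L *\<^sub>v x \<in> carrier_vec Nt" if "x \<in> const_vecs X Nt" for x
    using that yt L_carr unfolding const_vecs_def by auto
  show ?thesis
    using xML xWLD weighted_residual_bounds[OF W(1) Nt(2) W(2) residual[OF xML(1)] residual[OF xWLD(1)]]
    unfolding Let_def yt_def by blast
qed

end
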